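(* Let $\Lambda$ be a row-finite $k$-graph with no sources and let $\alpha$ be an action of $\mathbb{Z}^l$ on $\Lambda$ by automorphisms. Then there is a unique homeomorphism $x\mapsto(x,\infty)$ from $\Lambda^\infty$ onto $(\Lambda\times_\alpha\mathbb{Z}^l)^\infty$ such that $(x,\infty)((0,0),(p,0))=(x(0,p),0)$ for all $p\in\mathbb{N}^k$.
   Context: A $k$-graph is a countable category $\Lambda$ with a functor $d:\Lambda\to\mathbb{N}^k$ with the unique factorisation property; vertices are degree-$0$ morphisms; row-finite means each $v\Lambda^n$ is finite, no sources means each $v\Lambda^n$ is nonempty. An automorphism is a bijective degree-preserving functor. $\Lambda\times_\alpha\mathbb{Z}^l$ is the $(k+l)$-graph with morphisms $\Lambda\times\mathbb{N}^l$, degree $(d(\lambda),m)\in\mathbb{N}^k\times\mathbb{N}^l$, $r(\lambda,m)=(r(\lambda),0)$, $s(\lambda,m)=(\alpha_{-m}(s(\lambda)),0)$, $(\mu,m)(\nu,n)=(\mu\alpha_m(\nu),m+n)$. For a $j$-graph $\Gamma$, $\Gamma^\infty$ is the set of degree-preserving functors $x:\Omega_j\to\Gamma$, where $\Omega_j=\{(a,b)\in\mathbb{N}^j\times\mathbb{N}^j:a\le b\}$ with $r(a,b)=(a,a)$, $s(a,b)=(b,b)$, $(a,b)(b,c)=(a,c)$, $d(a,b)=b-a$. $\Gamma^\infty$ has the topology with basis the cylinder sets $\lambda\Gamma^\infty=\{x\in\Gamma^\infty:x(0,d(\lambda))=\lambda\}$, $\lambda\in\Gamma$. *)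

theory Defs
  imports "HOL-Analysis.Analysis" "HOL-Library.Function_Algebras"
begin

text \<open>A k-graph: a countable category (objects identified with identity morphisms)
  with a degree functor into the monoid 'k => nat (= N^k, 'k finite index type).\<close>

record ('a, 'k) kg =
  Mor :: "'a set"
  rng :: "'a \<Rightarrow> 'a"
  src :: "'a \<Rightarrow> 'a"
  cmp :: "'a \<Rightarrow> 'a \<Rightarrow> 'a"
  deg :: "'a \<Rightarrow> 'k \<Rightarrow> nat"

definition is_category :: "('a, 'k) kg \<Rightarrow> bool" where
  "is_category G \<longleftrightarrow>
     (\<forall>u\<in>Mor G. rng G u \<in> Mor G \<and> src G u \<in> Mor G
        \<and> rng G (rng G u) = rng G u \<and> src G (rng G u) = rng G u
        \<and> rng G (src G u) = src G u \<and> src G (src G u) = src G u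
        \<and> cmp G (rng G u) u = u \<and> cmp G u (src G u) = u)
   \<and> (\<forall>u\<in>Mor G. \<forall>v\<in>Mor G. src G u = rng G v \<longrightarrow>
        cmp G u v \<in> Mor G \<and> rng G (cmp G u v) = rng G u \<and> src G (cmp G u v) = src G v)
   \<and> (\<forall>u\<in>Mor G. \<forall>v\<in>Mor G. \<forall>w\<in>Mor G. src G u = rng G v \<and> src G v = rng G w \<longrightarrow>
        cmp G (cmp G u v) w = cmp G u (cmp G v w))"

definition is_kgraph :: "('a, 'k::finite) kg \<Rightarrow> bool" where
  "is_kgraph G \<longleftrightarrow> is_category G \<and> countable (Mor G)
   \<and> (\<forall>u\<in>Mor G. \<forall>v\<in>Mor G. src G u = rng G v \<longrightarrow> deg G (cmp G u v) = deg G u + deg G v)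
   \<and> (\<forall>u\<in>Mor G. \<forall>m n. deg G u = m + n \<longrightarrow>
        (\<exists>!(p, q). p \<in> Mor G \<and> q \<in> Mor G \<and> src G p = rng G q
           \<and> deg G p = m \<and> deg G q = n \<and> cmp G p q = u))"

definition vertices :: "('a, 'k) kg \<Rightarrow> 'a set" where
  "vertices G = {v \<in> Mor G. deg G v = 0}"

definition row_finite :: "('a, 'k) kg \<Rightarrow> bool" where
  "row_finite G \<longleftrightarrow> (\<forall>v\<in>vertices G. \<forall>n. finite {u \<in> Mor G. rng G u = v \<and> deg G u = n})"

definition no_sources :: "('a, 'k) kg \<Rightarrow> bool" where
  "no_sources G \<longleftrightarrow> (\<forall>v\<in>vertices G. \<forall>n. {u \<in> Mor G. rng G u = v \<and> deg G u = n} \<noteq> {})"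

definition is_automorphism :: "('a, 'k) kg \<Rightarrow> ('a \<Rightarrow> 'a) \<Rightarrow> bool" where
  "is_automorphism G f \<longleftrightarrow> bij_betw f (Mor G) (Mor G)
   \<and> (\<forall>u\<in>Mor G. deg G (f u) = deg G u \<and> rng G (f u) = f (rng G u) \<and> src G (f u) = f (src G u))
   \<and> (\<forall>u\<in>Mor G. \<forall>v\<in>Mor G. src G u = rng G v \<longrightarrow> f (cmp G u v) = cmp G (f u) (f v))"

definition is_action :: "('a, 'k) kg \<Rightarrow> (('l \<Rightarrow> int) \<Rightarrow> 'a \<Rightarrow> 'a) \<Rightarrow> bool" where
  "is_action G \<alpha> \<longleftrightarrow> (\<forall>m. is_automorphism G (\<alpha> m))
   \<and> (\<forall>u\<in>Mor G. \<alpha> 0 u = u)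
   \<and> (\<forall>m n. \<forall>u\<in>Mor G. \<alpha> (m + n) u = \<alpha> m (\<alpha> n u))"

text \<open>The crossed product (k+l)-graph \<Lambda> \<times>_\<alpha> Z^l; N^(k+l) is ('k + 'l) => nat.\<close>
definition cross_product :: "('a, 'k) kg \<Rightarrow> (('l \<Rightarrow> int) \<Rightarrow> 'a \<Rightarrow> 'a)
    \<Rightarrow> ('a \<times> ('l \<Rightarrow> nat), 'k + 'l) kg" where
  "cross_product G \<alpha> =
    \<lparr> Mor = Mor G \<times> UNIV,
      rng = (\<lambda>(u, m). (rng G u, 0)),
      src = (\<lambda>(u, m). (\<alpha> (- (int \<circ> m)) (src G u), 0)),
      cmp = (\<lambda>(u, m) (v, n). (cmp G u (\<alpha> (int \<circ> m) v), m + n)),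
      deg = (\<lambda>(u, m) i. case i of Inl a \<Rightarrow> deg G u a | Inr b \<Rightarrow> m b) \<rparr>"

text \<open>Infinite paths: degree-preserving functors \<Omega>_j -> G, where \<Omega>_j has morphisms
  the pairs (a,b) with a \<le> b; such functors are represented as functions on pairs,
  fixed to be undefined outside \<Omega>_j.\<close>
definition inf_paths :: "('a, 'j) kg \<Rightarrow> ((('j \<Rightarrow> nat) \<times> ('j \<Rightarrow> nat)) \<Rightarrow> 'a) set" where
  "inf_paths G = {x.
     (\<forall>a b. a \<le> b \<longrightarrow> x (a, b) \<in> Mor G \<and> deg G (x (a, b)) = b - a
            \<and> rng G (x (a, b)) = x (a, a) \<and> src G (x (a, b)) = x (b, b))
   \<and> (\<forall>a b c. a \<le> b \<and> b \<le> c \<longrightarrow> x (a, c) = cmp G (x (a, b)) (x (b, c)))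
   \<and> (\<forall>a b. \<not> a \<le> b \<longrightarrow> x (a, b) = undefined)}"

definition cylinder :: "('a, 'j) kg \<Rightarrow> 'a \<Rightarrow> ((('j \<Rightarrow> nat) \<times> ('j \<Rightarrow> nat)) \<Rightarrow> 'a) set" where
  "cylinder G u = {x \<in> inf_paths G. x (0, deg G u) = u}"

definition path_topology :: "('a, 'j) kg \<Rightarrow> ((('j \<Rightarrow> nat) \<times> ('j \<Rightarrow> nat)) \<Rightarrow> 'a) topology" where
  "path_topology G = topology_generated_by {cylinder G u | u. u \<in> Mor G}"

definition embed_deg :: "('k \<Rightarrow> nat) \<Rightarrow> ('k + 'l \<Rightarrow> nat)" where
  "embed_deg p = (\<lambda>i. case i of Inl a \<Rightarrow> p a | Inr _ \<Rightarrow> 0)"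

end

theory Submission
  imports Defs
begin

text \<open>An infinite path \<open>y\<close> of \<open>\<Lambda> \<times>\<^sub>\<alpha> \<int>\<^sup>l\<close> is determined by its values
  \<open>x(p,q) := y((p,0),(q,0))\<close>. Indeed, a segment of degree \<open>(0,n)\<close> is a vertex, so
  composing with it changes nothing but the \<open>\<nat>\<^sup>l\<close>-label; comparing the two ways round the
  square with corners \<open>(p,0), (p,m), (q,0), (q,m)\<close>, whose vertical sides are vertices, forces
  \<open>y((p,m),(q,n)) = (\<alpha>\<^bsub>-m\<^esub>(x(p,q)), n - m)\<close>. Conversely this formula defines an infinite path
  \<open>(x,\<infinity>)\<close> for every infinite path \<open>x\<close> of \<open>\<Lambda>\<close>. The two maps are mutually inverse and pull
  cylinder sets back to cylinder sets, so they are homeomorphisms. Uniqueness holds because an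
  infinite path of \<open>\<Lambda>\<close> is determined by its initial segments \<open>x(0,p)\<close>.\<close>

declare case_sum_o_inj [simp]

lemma case_sum_le_case_sum_iff [simp]:
  "case_sum p m \<le> case_sum q n \<longleftrightarrow> p \<le> q \<and> (m :: 'l \<Rightarrow> 'b::order) \<le> n"
  by (auto simp: le_fun_def split: sum.splits)

lemma case_sum_diff [simp]:
  "case_sum q n - case_sum p m = case_sum (q - p) (n - m :: 'l \<Rightarrow> 'b::minus)"
  by (auto simp: fun_eq_iff split: sum.splits)

lemma case_sum_eq_iff [simp]: "case_sum p m = case_sum q n \<longleftrightarrow> p = q \<and> m = n"
proof
  assume "case_sum p m = case_sum q n"
  then have "case_sum p m \<circ> Inl = case_sum q n \<circ> Inl" "case_sum p m \<circ> Inr = case_sum q n \<circ> Inr"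
    by simp_all
  then show "p = q \<and> m = n" by simp
qed simp

lemma case_sum_zero [simp]: "case_sum 0 0 = (0 :: 'k + 'l \<Rightarrow> 'b::zero)"
  by (auto simp: fun_eq_iff split: sum.splits)

lemma embed_deg_eq_case_sum: "embed_deg p = case_sum p 0"
  by (auto simp: embed_deg_def fun_eq_iff split: sum.splits)

lemma obtain_case_sum:
  obtains p m where "a = case_sum p m"
  by (rule that [OF sym [OF case_sum_expand_Inr_pointfree [OF refl]]])

lemma zero_fun_comp [simp]: "(0 :: 'b \<Rightarrow> 'c::zero) \<circ> f = 0"
  by (simp add: fun_eq_iff)

lemma int_comp_zero [simp]: "int \<circ> 0 = 0"
  by (simp add: fun_eq_iff)

lemma int_comp_diff: "m \<le> n \<Longrightarrow> int \<circ> (n - m) = (int \<circ> n) - (int \<circ> m)"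
  by (auto simp: fun_eq_iff le_fun_def of_nat_diff)

subsection \<open>The path topology\<close>

lemma inf_pathD:
  assumes "x \<in> inf_paths G"
  shows "a \<le> b \<Longrightarrow> x (a, b) \<in> Mor G"
    and "a \<le> b \<Longrightarrow> deg G (x (a, b)) = b - a"
    and "a \<le> b \<Longrightarrow> rng G (x (a, b)) = x (a, a)"
    and "a \<le> b \<Longrightarrow> src G (x (a, b)) = x (b, b)"
    and "a \<le> b \<Longrightarrow> b \<le> c \<Longrightarrow> x (a, c) = cmp G (x (a, b)) (x (b, c))"
    and "\<not> a \<le> b \<Longrightarrow> x (a, b) = undefined"
  using assms by (auto simp: inf_paths_def)

lemma topspace_path_topology [simp]: "topspace (path_topology G) = inf_paths G"
  unfolding path_topology_def topology_generated_by_topspace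
proof (intro equalityI subsetI)
  fix x
  assume "x \<in> \<Union> {cylinder G u | u. u \<in> Mor G}"
  then show "x \<in> inf_paths G" by (auto simp: cylinder_def)
next
  fix x
  assume x: "x \<in> inf_paths G"
  then have "x (0, 0) \<in> Mor G" "deg G (x (0, 0)) = 0"
    using inf_pathD(1,2) [OF x, of 0 0] by simp_all
  with x have "x \<in> cylinder G (x (0, 0))" "x (0, 0) \<in> Mor G"
    by (simp_all add: cylinder_def)
  then show "x \<in> \<Union> {cylinder G u | u. u \<in> Mor G}" by blast
qed

lemma openin_cylinder: "u \<in> Mor G \<Longrightarrow> openin (path_topology G) (cylinder G u)"
  unfolding path_topology_def by (rule topology_generated_by_Basis) auto

lemma continuous_map_path_topologyI:
  assumes "f ` inf_paths G \<subseteq> inf_paths H"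
    and "\<And>v. v \<in> Mor H \<Longrightarrow> \<exists>u\<in>Mor G. {x \<in> inf_paths G. f x \<in> cylinder H v} = cylinder G u"
  shows "continuous_map (path_topology G) (path_topology H) f"
  unfolding path_topology_def [of H]
proof (rule continuous_on_generated_topo)
  fix U assume "U \<in> {cylinder H v | v. v \<in> Mor H}"
  then obtain v where "v \<in> Mor H" "U = cylinder H v" by blast
  with assms(2) obtain u where "u \<in> Mor G" "f -` U \<inter> inf_paths G = cylinder G u" by blast
  then show "openin (path_topology G) (f -` U \<inter> topspace (path_topology G))"
    by (simp add: openin_cylinder)
next
  have "\<Union> {cylinder H v | v. v \<in> Mor H} = inf_paths H"
    using topspace_path_topology [of H] unfolding path_topology_def topology_generated_by_topspace .
  then show "f ` topspace (path_topology G) \<subseteq> \<Union> {cylinder H v | v. v \<in> Mor H}"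
    using assms(1) by simp
qed

subsection \<open>Infinite paths of a \<open>k\<close>-graph\<close>

locale kgraph =
  fixes G :: "('a, 'k::finite) kg"
  assumes kgraph: "is_kgraph G"
begin

lemma
  shows rng_in_Mor [simp]: "u \<in> Mor G \<Longrightarrow> rng G u \<in> Mor G"
    and src_in_Mor [simp]: "u \<in> Mor G \<Longrightarrow> src G u \<in> Mor G"
    and rng_rng [simp]: "u \<in> Mor G \<Longrightarrow> rng G (rng G u) = rng G u"
    and src_rng [simp]: "u \<in> Mor G \<Longrightarrow> src G (rng G u) = rng G u"
    and rng_src [simp]: "u \<in> Mor G \<Longrightarrow> rng G (src G u) = src G u"
    and src_src [simp]: "u \<in> Mor G \<Longrightarrow> src G (src G u) = src G u"
    and cmp_rng_left [simp]: "u \<in> Mor G \<Longrightarrow> cmp G (rng G u) u = u"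
    and cmp_src_right [simp]: "u \<in> Mor G \<Longrightarrow> cmp G u (src G u) = u"
    and cmp_in_Mor [simp]:
      "\<lbrakk>u \<in> Mor G; v \<in> Mor G; src G u = rng G v\<rbrakk> \<Longrightarrow> cmp G u v \<in> Mor G"
    and rng_cmp [simp]:
      "\<lbrakk>u \<in> Mor G; v \<in> Mor G; src G u = rng G v\<rbrakk> \<Longrightarrow> rng G (cmp G u v) = rng G u"
    and src_cmp [simp]:
      "\<lbrakk>u \<in> Mor G; v \<in> Mor G; src G u = rng G v\<rbrakk> \<Longrightarrow> src G (cmp G u v) = src G v"
    and deg_cmp:
      "\<lbrakk>u \<in> Mor G; v \<in> Mor G; src G u = rng G v\<rbrakk> \<Longrightarrow> deg G (cmp G u v) = deg G u + deg G v"
  using kgraph by (auto simp: is_kgraph_def is_category_def)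

lemma factorisation_unique:
  assumes "u \<in> Mor G" "v \<in> Mor G" "src G u = rng G v"
    and "u' \<in> Mor G" "v' \<in> Mor G" "src G u' = rng G v'"
    and "deg G u = deg G u'" "deg G v = deg G v'" "cmp G u v = cmp G u' v'"
  shows "u = u'" "v = v'"
proof -
  have "cmp G u v \<in> Mor G" "deg G (cmp G u v) = deg G u + deg G v"
    using assms(1-3) by (simp_all add: deg_cmp)
  then have "\<exists>!(p, q). p \<in> Mor G \<and> q \<in> Mor G \<and> src G p = rng G q
      \<and> deg G p = deg G u \<and> deg G q = deg G v \<and> cmp G p q = cmp G u v"
    using kgraph unfolding is_kgraph_def by blast
  with assms show "u = u'" "v = v'" by (auto simp: Ex1_def)
qed

lemma deg_zero_rng_eq:
  assumes "v \<in> Mor G" "deg G v = 0"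
  shows "rng G v = v"
proof -
  have "deg G (rng G v) = 0" "deg G (src G v) = 0"
    using deg_cmp [of "rng G v" v] deg_cmp [of v "src G v"] assms by simp_all
  then show ?thesis
    using factorisation_unique(1) [of "rng G v" v v "src G v"] assms by simp
qed

lemma deg_zero_src_eq:
  assumes "v \<in> Mor G" "deg G v = 0"
  shows "src G v = v"
  using src_rng [OF assms(1)] deg_zero_rng_eq [OF assms] by simp

lemma cmp_deg_zero_right [simp]:
  assumes "u \<in> Mor G" "w \<in> Mor G" "deg G w = 0" "src G u = rng G w"
  shows "cmp G u w = u"
proof -
  have "w = src G u"
    using assms deg_zero_rng_eq [of w] by simp
  then show ?thesis
    using assms(1) by simp
qed

lemma cmp_deg_zero_left [simp]:
  assumes "u \<in> Mor G" "w \<in> Mor G" "deg G w = 0" "src G w = rng G u"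
  shows "cmp G w u = u"
proof -
  have "w = rng G u"
    using assms deg_zero_src_eq [of w] by simp
  then show ?thesis
    using assms(1) by simp
qed

lemma inf_path_eqI:
  assumes x: "x \<in> inf_paths G" and x': "x' \<in> inf_paths G"
    and initial: "\<And>p. x (0, p) = x' (0, p)"
  shows "x = x'"
proof (rule ext, clarify)
  fix p q :: "'k \<Rightarrow> nat"
  show "x (p, q) = x' (p, q)"
  proof (cases "p \<le> q")
    case True
    have "0 \<le> p" by simp
    have "x (p, p) = x' (p, p)"
      using inf_pathD(4) [OF x \<open>0 \<le> p\<close>] inf_pathD(4) [OF x' \<open>0 \<le> p\<close>] initial by metis
    moreover have "cmp G (x (0, p)) (x (p, q)) = cmp G (x' (0, p)) (x' (p, q))"
      using inf_pathD(5) [OF x \<open>0 \<le> p\<close> True] inf_pathD(5) [OF x' \<open>0 \<le> p\<close> True] initial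
      by metis
    ultimately show ?thesis
      using factorisation_unique(2) [of "x (0, p)" "x (p, q)" "x' (0, p)" "x' (p, q)"] True initial
      by (simp add: inf_pathD(1-4) [OF x] inf_pathD(1-4) [OF x'])
  next
    case False
    then show ?thesis by (simp add: inf_pathD(6) [OF x] inf_pathD(6) [OF x'])
  qed
qed

end

subsection \<open>Infinite paths of the crossed product\<close>

locale kgraph_action = kgraph G for G :: "('a, 'k::finite) kg" +
  fixes \<alpha> :: "('l \<Rightarrow> int) \<Rightarrow> 'a \<Rightarrow> 'a"
  assumes action: "is_action G \<alpha>"
begin

lemma alpha_in_Mor [simp]: "u \<in> Mor G \<Longrightarrow> \<alpha> m u \<in> Mor G"
  using action unfolding is_action_def is_automorphism_def bij_betw_def by blast

lemma
  shows deg_alpha [simp]: "u \<in> Mor G \<Longrightarrow> deg G (\<alpha> m u) = deg G u"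
    and rng_alpha [simp]: "u \<in> Mor G \<Longrightarrow> rng G (\<alpha> m u) = \<alpha> m (rng G u)"
    and src_alpha [simp]: "u \<in> Mor G \<Longrightarrow> src G (\<alpha> m u) = \<alpha> m (src G u)"
    and alpha_cmp:
      "\<lbrakk>u \<in> Mor G; v \<in> Mor G; src G u = rng G v\<rbrakk> \<Longrightarrow> \<alpha> m (cmp G u v) = cmp G (\<alpha> m u) (\<alpha> m v)"
    and alpha_zero [simp]: "u \<in> Mor G \<Longrightarrow> \<alpha> 0 u = u"
    and alpha_alpha: "u \<in> Mor G \<Longrightarrow> \<alpha> m (\<alpha> n u) = \<alpha> (m + n) u"
  using action by (auto simp: is_action_def is_automorphism_def bij_betw_def)

lemma alpha_uminus_alpha [simp]: "u \<in> Mor G \<Longrightarrow> \<alpha> (- m) (\<alpha> m u) = u"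
  and alpha_alpha_uminus [simp]: "u \<in> Mor G \<Longrightarrow> \<alpha> m (\<alpha> (- m) u) = u"
  by (simp_all add: alpha_alpha)

abbreviation (input) "G\<alpha> \<equiv> cross_product G \<alpha>"

lemma cross_product_simps [simp]:
  "Mor G\<alpha> = Mor G \<times> UNIV"
  "rng G\<alpha> (u, m) = (rng G u, 0)"
  "src G\<alpha> (u, m) = (\<alpha> (- (int \<circ> m)) (src G u), 0)"
  "cmp G\<alpha> (u, m) (v, n) = (cmp G u (\<alpha> (int \<circ> m) v), m + n)"
  "deg G\<alpha> (u, m) = case_sum (deg G u) m"
  by (simp_all add: cross_product_def)

lemma cross_inf_pathD:
  assumes y: "y \<in> inf_paths G\<alpha>" and ab: "a \<le> b"
  shows "fst (y (a, b)) \<in> Mor G"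
    and "deg G (fst (y (a, b))) = (b \<circ> Inl) - (a \<circ> Inl)"
    and "snd (y (a, b)) = (b \<circ> Inr) - (a \<circ> Inr)"
    and "y (a, a) = (rng G (fst (y (a, b))), 0)"
    and "y (b, b) = (\<alpha> (- (int \<circ> snd (y (a, b)))) (src G (fst (y (a, b)))), 0)"
proof -
  obtain u m where um: "y (a, b) = (u, m)" by fastforce
  have "b - a = case_sum ((b \<circ> Inl) - (a \<circ> Inl)) ((b \<circ> Inr) - (a \<circ> Inr))"
    by (auto simp: fun_eq_iff split: sum.splits)
  moreover note inf_pathD(1-4) [OF y ab]
  ultimately show "fst (y (a, b)) \<in> Mor G" "deg G (fst (y (a, b))) = (b \<circ> Inl) - (a \<circ> Inl)"
    "snd (y (a, b)) = (b \<circ> Inr) - (a \<circ> Inr)" "y (a, a) = (rng G (fst (y (a, b))), 0)"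
    "y (b, b) = (\<alpha> (- (int \<circ> snd (y (a, b)))) (src G (fst (y (a, b)))), 0)"
    using um by auto
qed

lemma cross_inf_path_cmp:
  assumes "y \<in> inf_paths G\<alpha>" "a \<le> b" "b \<le> c"
  shows "fst (y (a, c)) = cmp G (fst (y (a, b))) (\<alpha> (int \<circ> snd (y (a, b))) (fst (y (b, c))))"
proof -
  have "y (a, c) = cmp G\<alpha> (y (a, b)) (y (b, c))"
    using inf_pathD(5) assms by blast
  then show ?thesis by (cases "y (a, b)", cases "y (b, c)") simp
qed

lemma cross_inf_path_shift:
  fixes m :: "'l \<Rightarrow> nat"
  assumes y: "y \<in> inf_paths G\<alpha>" and pq: "p \<le> q"
  shows "fst (y (case_sum p m, case_sum q m)) = \<alpha> (- (int \<circ> m)) (fst (y (case_sum p 0, case_sum q 0)))"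
proof -
  let ?A0 = "case_sum p (0::'l \<Rightarrow> nat)" and ?Am = "case_sum p m"
    and ?B0 = "case_sum q (0::'l \<Rightarrow> nat)" and ?Bm = "case_sum q m"
  let ?v = "fst (y (?A0, ?Am))" and ?u = "fst (y (?Am, ?Bm))"
    and ?x = "fst (y (?A0, ?B0))" and ?w = "fst (y (?B0, ?Bm))"
  have le: "?A0 \<le> ?Am" "?Am \<le> ?Bm" "?A0 \<le> ?B0" "?B0 \<le> ?Bm"
    using pq by simp_all
  note v = cross_inf_pathD [OF y le(1)] and u = cross_inf_pathD [OF y le(2)]
    and x = cross_inf_pathD [OF y le(3)] and w = cross_inf_pathD [OF y le(4)]
  have "rng G ?u = \<alpha> (- (int \<circ> m)) (src G ?v)"
    using v(3,5) u(4) by simp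
  then have "cmp G ?v (\<alpha> (int \<circ> m) ?u) = \<alpha> (int \<circ> m) ?u"
    using u(1) v(1,2) by simp
  moreover have "cmp G ?x ?w = ?x"
    using x(1,3,5) w(1,2,4) by simp
  moreover have "fst (y (?A0, ?Bm)) = cmp G ?v (\<alpha> (int \<circ> m) ?u)"
    using cross_inf_path_cmp [OF y le(1,2)] v(3) by simp
  moreover have "fst (y (?A0, ?Bm)) = cmp G ?x ?w"
    using cross_inf_path_cmp [OF y le(3,4)] x(3) w(1) by simp
  ultimately have "\<alpha> (int \<circ> m) ?u = ?x" by simp
  then show ?thesis
    using u(1) by (metis alpha_uminus_alpha)
qed

lemma cross_inf_path_vertical:
  fixes m n :: "'l \<Rightarrow> nat"
  assumes y: "y \<in> inf_paths G\<alpha>" and pq: "p \<le> q" and mn: "m \<le> n"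
  shows "fst (y (case_sum p m, case_sum q n)) = fst (y (case_sum p m, case_sum q m))"
proof -
  have le: "case_sum p m \<le> case_sum q m" "case_sum q m \<le> case_sum q n"
    using pq mn by simp_all
  note u = cross_inf_pathD [OF y le(1)] and w = cross_inf_pathD [OF y le(2)]
  show ?thesis
    using cross_inf_path_cmp [OF y le] u(1,3,5) w(1,2,4) by simp
qed

definition cross_path ::
    "(('k \<Rightarrow> nat) \<times> ('k \<Rightarrow> nat) \<Rightarrow> 'a)
      \<Rightarrow> ('k + 'l \<Rightarrow> nat) \<times> ('k + 'l \<Rightarrow> nat) \<Rightarrow> 'a \<times> ('l \<Rightarrow> nat)"
  where "cross_path x = (\<lambda>(a, b). if a \<le> b
     then (\<alpha> (- (int \<circ> (a \<circ> Inr))) (x (a \<circ> Inl, b \<circ> Inl)), (b \<circ> Inr) - (a \<circ> Inr)) else undefined)"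

definition base_path ::
    "(('k + 'l \<Rightarrow> nat) \<times> ('k + 'l \<Rightarrow> nat) \<Rightarrow> 'a \<times> ('l \<Rightarrow> nat))
      \<Rightarrow> ('k \<Rightarrow> nat) \<times> ('k \<Rightarrow> nat) \<Rightarrow> 'a"
  where "base_path y = (\<lambda>(p, q). if p \<le> q then fst (y (case_sum p 0, case_sum q 0)) else undefined)"

lemma cross_path_case_sum [simp]:
  fixes m n :: "'l \<Rightarrow> nat"
  shows "cross_path x (case_sum p m, case_sum q n) =
    (if p \<le> q \<and> m \<le> n then (\<alpha> (- (int \<circ> m)) (x (p, q)), n - m) else undefined)"
  by (simp add: cross_path_def)

lemma cross_path_in_inf_paths:
  assumes x: "x \<in> inf_paths G"
  shows "cross_path x \<in> inf_paths G\<alpha>"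
  unfolding inf_paths_def mem_Collect_eq
proof (intro conjI allI impI)
  fix a b :: "'k + 'l \<Rightarrow> nat"
  assume "a \<le> b"
  moreover obtain p m q n where "a = case_sum p m" "b = case_sum q n"
    by (metis obtain_case_sum)
  ultimately have pq: "p \<le> q" and mn: "m \<le> n" and ab: "a = case_sum p m" "b = case_sum q n"
    by auto
  have "- (int \<circ> (n - m)) + - (int \<circ> m) = - (int \<circ> n)"
    using int_comp_diff [OF mn] by (simp add: algebra_simps)
  then show "cross_path x (a, b) \<in> Mor G\<alpha>" "deg G\<alpha> (cross_path x (a, b)) = b - a"
    "rng G\<alpha> (cross_path x (a, b)) = cross_path x (a, a)"
    "src G\<alpha> (cross_path x (a, b)) = cross_path x (b, b)"
    using pq mn by (simp_all add: ab inf_pathD(1-4) [OF x] alpha_alpha)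
next
  fix a b c :: "'k + 'l \<Rightarrow> nat"
  assume "a \<le> b \<and> b \<le> c"
  moreover obtain p m q n r s where "a = case_sum p m" "b = case_sum q n" "c = case_sum r s"
    by (metis obtain_case_sum)
  ultimately have le: "p \<le> q" "q \<le> r" "m \<le> n" "n \<le> s"
    and abc: "a = case_sum p m" "b = case_sum q n" "c = case_sum r s"
    by auto
  have "(int \<circ> (n - m)) + - (int \<circ> n) = - (int \<circ> m)"
    using int_comp_diff [OF le(3)] by (simp add: algebra_simps)
  moreover have "s - m = (n - m) + (s - n)"
    using le(3,4) by (auto simp: fun_eq_iff le_fun_def)
  ultimately show "cross_path x (a, c) = cmp G\<alpha> (cross_path x (a, b)) (cross_path x (b, c))"
    using le order_trans [OF le(1,2)] order_trans [OF le(3,4)]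
    by (simp add: abc inf_pathD(1-4) [OF x] inf_pathD(5) [OF x le(1,2)] alpha_alpha alpha_cmp)
next
  fix a b :: "'k + 'l \<Rightarrow> nat"
  assume "\<not> a \<le> b"
  then show "cross_path x (a, b) = undefined" by (simp add: cross_path_def)
qed

lemma base_path_in_inf_paths:
  assumes y: "y \<in> inf_paths G\<alpha>"
  shows "base_path y \<in> inf_paths G"
  unfolding inf_paths_def mem_Collect_eq
proof (intro conjI allI impI)
  fix p q :: "'k \<Rightarrow> nat"
  assume pq: "p \<le> q"
  then have "case_sum p (0::'l \<Rightarrow> nat) \<le> case_sum q 0" by simp
  note Y = cross_inf_pathD [OF y this]
  show "base_path y (p, q) \<in> Mor G" "deg G (base_path y (p, q)) = q - p"
    "rng G (base_path y (p, q)) = base_path y (p, p)"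
    "src G (base_path y (p, q)) = base_path y (q, q)"
    using pq Y by (simp_all add: base_path_def)
next
  fix p q r :: "'k \<Rightarrow> nat"
  assume "p \<le> q \<and> q \<le> r"
  then have le: "case_sum p (0::'l \<Rightarrow> nat) \<le> case_sum q 0" "case_sum q (0::'l \<Rightarrow> nat) \<le> case_sum r 0"
    and "p \<le> r"
    by auto
  then show "base_path y (p, r) = cmp G (base_path y (p, q)) (base_path y (q, r))"
    using cross_inf_path_cmp [OF y le] cross_inf_pathD(1,3) [OF y le(1)] cross_inf_pathD(1) [OF y le(2)]
    by (simp add: base_path_def)
next
  fix p q :: "'k \<Rightarrow> nat"
  assume "\<not> p \<le> q"
  then show "base_path y (p, q) = undefined" by (simp add: base_path_def)
qed

lemma base_path_cross_path:
  assumes x: "x \<in> inf_paths G"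
  shows "base_path (cross_path x) = x"
  by (auto simp: fun_eq_iff base_path_def inf_pathD(1,6) [OF x])

lemma cross_path_base_path:
  assumes y: "y \<in> inf_paths G\<alpha>"
  shows "cross_path (base_path y) = y"
proof (rule ext, clarify)
  fix a b :: "'k + 'l \<Rightarrow> nat"
  obtain p m q n where ab: "a = case_sum p m" "b = case_sum q n"
    by (metis obtain_case_sum)
  show "cross_path (base_path y) (a, b) = y (a, b)"
  proof (cases "a \<le> b")
    case True
    then have pq: "p \<le> q" and mn: "m \<le> n" by (auto simp: ab)
    have "fst (y (a, b)) = \<alpha> (- (int \<circ> m)) (fst (y (case_sum p 0, case_sum q 0)))"
      unfolding ab cross_inf_path_vertical [OF y pq mn] by (rule cross_inf_path_shift [OF y pq])
    moreover have "snd (y (a, b)) = n - m"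
      using cross_inf_pathD(3) [OF y True] by (simp add: ab)
    ultimately show ?thesis
      using pq mn by (simp add: ab base_path_def prod_eq_iff)
  next
    case False
    then show ?thesis
      by (simp add: cross_path_def inf_pathD(6) [OF y])
  qed
qed

lemma cross_path_initial:
  fixes m :: "'l \<Rightarrow> nat"
  shows "x \<in> inf_paths G \<Longrightarrow> cross_path x (0, case_sum p m) = (x (0, p), m)"
  using cross_path_case_sum [of x 0 0 p m] by (simp add: inf_pathD(1))

lemma continuous_map_cross_path:
  "continuous_map (path_topology G) (path_topology G\<alpha>) cross_path"
proof (rule continuous_map_path_topologyI)
  show "cross_path ` inf_paths G \<subseteq> inf_paths G\<alpha>"
    using cross_path_in_inf_paths by blast
next
  fix v assume "v \<in> Mor G\<alpha>"
  then obtain u m where v: "v = (u, m)" and u: "u \<in> Mor G" by auto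
  have "{x \<in> inf_paths G. cross_path x \<in> cylinder G\<alpha> v} = cylinder G u"
    by (auto simp: v cylinder_def cross_path_initial cross_path_in_inf_paths)
  with u show "\<exists>u\<in>Mor G. {x \<in> inf_paths G. cross_path x \<in> cylinder G\<alpha> v} = cylinder G u"
    by blast
qed

lemma continuous_map_base_path:
  "continuous_map (path_topology G\<alpha>) (path_topology G) base_path"
proof (rule continuous_map_path_topologyI)
  show "base_path ` inf_paths G\<alpha> \<subseteq> inf_paths G"
    using base_path_in_inf_paths by blast
next
  fix u assume u: "u \<in> Mor G"
  have "y \<in> cylinder G\<alpha> (u, 0) \<longleftrightarrow> base_path y \<in> cylinder G u" if y: "y \<in> inf_paths G\<alpha>" for y
  proof -
    have le: "case_sum 0 0 \<le> case_sum (deg G u) (0::'l \<Rightarrow> nat)" by simp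
    have "y (0, case_sum (deg G u) 0) = (fst (y (0, case_sum (deg G u) 0)), 0)"
      using cross_inf_pathD(3) [OF y le] by (simp add: prod_eq_iff)
    then show ?thesis
      using y base_path_in_inf_paths [OF y] by (auto simp: cylinder_def base_path_def)
  qed
  then have "{y \<in> inf_paths G\<alpha>. base_path y \<in> cylinder G u} = cylinder G\<alpha> (u, 0)"
    by (auto simp: cylinder_def)
  with u show "\<exists>v\<in>Mor G\<alpha>. {y \<in> inf_paths G\<alpha>. base_path y \<in> cylinder G u} = cylinder G\<alpha> v"
    by auto
qed

lemma homeomorphic_map_cross_path:
  "homeomorphic_map (path_topology G) (path_topology G\<alpha>) cross_path"
  by (rule homeomorphic_maps_imp_map [of _ _ _ base_path])
    (simp add: homeomorphic_maps_def continuous_map_cross_path continuous_map_base_path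
      base_path_cross_path cross_path_base_path)

lemma cross_path_unique:
  assumes g: "homeomorphic_map (path_topology G) (path_topology G\<alpha>) g"
    and g_initial: "\<And>p. g x (0, embed_deg p) = (x (0, p), 0)"
    and x: "x \<in> inf_paths G"
  shows "g x = cross_path x"
proof -
  have y: "g x \<in> inf_paths G\<alpha>"
    using homeomorphic_imp_surjective_map [OF g] x by auto
  have "base_path (g x) = x"
    by (rule inf_path_eqI [OF base_path_in_inf_paths [OF y] x])
      (use g_initial in \<open>simp add: base_path_def embed_deg_eq_case_sum\<close>)
  then show ?thesis
    using cross_path_base_path [OF y] by metis
qed

end

theorem proposition4p4:
  fixes G :: "('a, 'k::finite) kg"
    and \<alpha> :: "('l::finite \<Rightarrow> int) \<Rightarrow> 'a \<Rightarrow> 'a"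
  assumes "is_kgraph G" and "row_finite G" and "no_sources G"
    and "is_action G \<alpha>"
  shows "\<exists>f. homeomorphic_map (path_topology G) (path_topology (cross_product G \<alpha>)) f
            \<and> (\<forall>x\<in>inf_paths G. \<forall>p. f x (0, embed_deg p) = (x (0, p), 0))
         \<and> (\<forall>g. homeomorphic_map (path_topology G) (path_topology (cross_product G \<alpha>)) g
              \<and> (\<forall>x\<in>inf_paths G. \<forall>p. g x (0, embed_deg p) = (x (0, p), 0))
              \<longrightarrow> (\<forall>x\<in>inf_paths G. g x = f x))"
proof -
  interpret kgraph_action G \<alpha>
    using assms(1,4) by unfold_locales
  show ?thesis
  proof (intro exI [of _ cross_path] conjI ballI allI impI)
    fix x p
    assume "x \<in> inf_paths G"
    then show "cross_path x (0, embed_deg p) = (x (0, p), 0)"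
      by (simp add: embed_deg_eq_case_sum cross_path_initial)
  next
    fix g x
    assume "homeomorphic_map (path_topology G) (path_topology (cross_product G \<alpha>)) g
        \<and> (\<forall>x\<in>inf_paths G. \<forall>p. g x (0, embed_deg p) = (x (0, p), 0))"
      and "x \<in> inf_paths G"
    then show "g x = cross_path x"
      by (simp add: cross_path_unique)
  qed (rule homeomorphic_map_cross_path)
qed

end
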